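(* Let $k, m, s$ be positive integers with $m \geq 2$, $s \leq k-2$ and $m 2^{-s} \leq 1/4$, let $n = km$, and let $\mathcal{F} \subset \mathcal{P}([n])$ be constructed as follows: partition $[n]$ into blocks $B_1,\ldots,B_m$ with $|B_i| = k$, choose $T_i \subset B_i$ with $|T_i| = s$, put $T = \bigcup_i T_i$, and let $\mathcal{F}$ be the union-closed family generated by $\{B_i \cup \{t\} : i \in [m],\ t \in T\}$. Then: (i) for every $x \in [n]\setminus T$, $\frac{1}{m} \leq \gamma_x \leq \frac{2}{m}$; (ii) for every $x \in T$, $\frac12 \leq \gamma_x \leq 1$; (iii) $\displaystyle \frac{1}{m} \leq \mathrm{AOD}(\mathcal{F}) \leq \frac{2}{m} + \frac{m^2 s}{n}$.
   Context: $[n] = \{1,\ldots,n\}$. A family of sets is union-closed if it contains the union of any two of its members; the union-closed family generated by $\mathcal{G}$ is the smallest union-closed family containing $\mathcal{G}$. For a finite nonempty family $\mathcal{F} \subset \mathcal{P}(X)$ and $x \in X$, the abundance is $\gamma_x = |\{A \in \mathcal{F} : x \in A\}|/|\mathcal{F}|$. For $\mathcal{F} \neq \emptyset,\{\emptyset\}$, the average overlap density is $\mathrm{AOD}(\mathcal{F}) = \frac{1}{|\mathcal{F}\setminus\{\emptyset\}|}\sum_{A \in \mathcal{F}\setminus\{\emptyset\}} \frac{1}{|A|}\sum_{x \in A}\gamma_x$. *)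

theory Defs
  imports Complex_Main
begin

definition union_closed :: "'a set set \<Rightarrow> bool" where
  "union_closed F \<longleftrightarrow> (\<forall>A\<in>F. \<forall>B\<in>F. A \<union> B \<in> F)"

definition uc_generated :: "'a set set \<Rightarrow> 'a set set" where
  "uc_generated G = \<Inter>{F. G \<subseteq> F \<and> union_closed F}"

definition abundance :: "'a set set \<Rightarrow> 'a \<Rightarrow> real" where
  "abundance F x = real (card {A\<in>F. x \<in> A}) / real (card F)"

definition AOD :: "'a set set \<Rightarrow> real" where
  "AOD F = (1 / real (card (F - {{}}))) *
     (\<Sum>A\<in>F - {{}}. (1 / real (card A)) * (\<Sum>x\<in>A. abundance F x))"

end

theory Submission
  imports Defs "HOL-Library.FuncSet" "HOL-Library.Disjoint_Sets"
begin

(* The union-closed family generated by the sets B_i \<union> {t} consists exactly of the sets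
   A \<subseteq> [n] whose trace on each block B_i is either B_i or a subset of T_i, at least one
   trace being a full block.  Traces on different blocks can be chosen independently, so with
   q = 2^s the family has (q+1)^m - q^m members, and a point x \<notin> T, say x \<in> B_j, lies in
   the (q+1)^(m-1) members containing B_j; Bernoulli's inequality puts this ratio between 1/m
   and 2/m once q \<ge> m - 2.  For x \<in> T, adding x to a member gives a member, so at least half
   of the members contain x.  The AOD bounds follow by averaging: each member has at least k
   elements, at most ms of which lie in T. *)

lemma succ_power_diff_le:
  fixes q :: real
  assumes "0 \<le> q"
  shows "(q + 1) ^ Suc j - q ^ Suc j \<le> real (Suc j) * (q + 1) ^ j"
proof -
  have "1 - real (Suc j) / (q + 1) \<le> (q / (q + 1)) ^ Suc j"
    using Bernoulli_inequality[of "- 1 / (q + 1)" "Suc j"] assms by (simp add: field_simps)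
  then have "(q + 1) ^ Suc j * (1 - real (Suc j) / (q + 1)) \<le> (q + 1) ^ Suc j * (q / (q + 1)) ^ Suc j"
    using assms by (intro mult_left_mono) auto
  also have "\<dots> = q ^ Suc j"
    using assms by (simp add: power_divide)
  also have "(q + 1) ^ Suc j * (1 - real (Suc j) / (q + 1)) = (q + 1) ^ Suc j - real (Suc j) * (q + 1) ^ j"
    using assms by (simp add: field_simps)
  finally show ?thesis by simp
qed

lemma succ_power_diff_ge:
  fixes q :: real
  assumes "0 < q" "real (Suc j) \<le> q + 2"
  shows "real (Suc j) * (q + 1) ^ j \<le> 2 * ((q + 1) ^ Suc j - q ^ Suc j)"
proof -
  have "1 + real (Suc j) / q \<le> ((q + 1) / q) ^ Suc j"
    using Bernoulli_inequality[of "1 / q" "Suc j"] assms by (simp add: field_simps)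
  then have "q ^ Suc j * (1 + real (Suc j) / q) \<le> q ^ Suc j * ((q + 1) / q) ^ Suc j"
    using assms by (intro mult_left_mono) auto
  also have "\<dots> = (q + 1) ^ Suc j"
    using assms by (simp add: power_divide)
  also have "q ^ Suc j * (1 + real (Suc j) / q) = q ^ Suc j + real (Suc j) * q ^ j"
    using assms by (simp add: field_simps)
  finally have Bq: "q ^ Suc j + real (Suc j) * q ^ j \<le> (q + 1) ^ Suc j" .
  \<comment> \<open>after multiplying by \<open>q + Suc j\<close>, the claim follows from \<open>Bq\<close> and \<open>q + Suc j \<le> 2 * (q + 1)\<close>\<close>
  have "(q + real (Suc j)) * (real (Suc j) * (q + 1) ^ j)
      \<le> (q + real (Suc j)) * (2 * ((q + 1) ^ Suc j - q ^ Suc j))"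
  proof -
    have "2 * q * ((q + real (Suc j)) * q ^ j) \<le> 2 * q * ((q + 1) * (q + 1) ^ j)"
      using Bq assms by (intro mult_left_mono) (auto simp: algebra_simps)
    moreover have "(q + real (Suc j)) * (q + 1) ^ j \<le> 2 * (q + 1) * (q + 1) ^ j"
      using assms by (intro mult_right_mono) auto
    then have "real (Suc j) * ((q + real (Suc j)) * (q + 1) ^ j) \<le> real (Suc j) * (2 * (q + 1) * (q + 1) ^ j)"
      by (intro mult_left_mono) auto
    ultimately show ?thesis by (simp add: algebra_simps)
  qed
  then show ?thesis
    using assms by (simp add: mult_le_cancel_left_pos add_pos_nonneg)
qed

lemma succ_power_ratio_bounds:
  fixes q :: real
  assumes "0 < q" "1 \<le> m" "real m \<le> q + 2"
  shows "1 / real m \<le> (q + 1) ^ (m - 1) / ((q + 1) ^ m - q ^ m)"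
    and "(q + 1) ^ (m - 1) / ((q + 1) ^ m - q ^ m) \<le> 2 / real m"
proof -
  obtain j where m: "m = Suc j" using assms(2) by (cases m) auto
  have "q ^ m < (q + 1) ^ m"
    using assms m by (intro power_strict_mono) auto
  then have pos: "0 < (q + 1) ^ m - q ^ m" by simp
  show "1 / real m \<le> (q + 1) ^ (m - 1) / ((q + 1) ^ m - q ^ m)"
    using succ_power_diff_le[of q j] assms pos m by (simp add: field_simps)
  show "(q + 1) ^ (m - 1) / ((q + 1) ^ m - q ^ m) \<le> 2 / real m"
    using succ_power_diff_ge[of q j] assms pos m by (simp add: field_simps)
qed

lemma abundance_le_1: "abundance F x \<le> 1"
proof (cases "finite F")
  case True
  then have "card {A \<in> F. x \<in> A} \<le> card F" by (intro card_mono) auto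
  then show ?thesis
    unfolding abundance_def by (cases "card F = 0") (auto simp: divide_le_eq_1)
qed (simp add: abundance_def)

lemma abundance_ge_half:
  assumes "finite F" "F \<noteq> {}" "\<And>A. A \<in> F \<Longrightarrow> insert x A \<in> F"
  shows "1 / 2 \<le> abundance F x"
proof -
  have "inj_on (insert x) {A \<in> F. x \<notin> A}"
    by (rule inj_onI) (metis (no_types, lifting) Diff_insert_absorb mem_Collect_eq)
  moreover have "insert x ` {A \<in> F. x \<notin> A} \<subseteq> {A \<in> F. x \<in> A}"
    using assms(3) by auto
  ultimately have le: "card {A \<in> F. x \<notin> A} \<le> card {A \<in> F. x \<in> A}"
    using assms(1) by (intro card_inj_on_le) auto
  have "card F = card {A \<in> F. x \<in> A} + card {A \<in> F. x \<notin> A}"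
    using assms(1) by (subst card_Un_disjoint[symmetric]) (auto intro: arg_cong[where f = card])
  with le have "real (card F) \<le> 2 * real (card {A \<in> F. x \<in> A})" by simp
  moreover have "0 < real (card F)" using assms(1,2) by (simp add: card_gt_0_iff)
  ultimately show ?thesis
    unfolding abundance_def by (simp add: field_simps)
qed

lemma mean_ge:
  fixes f :: "'a \<Rightarrow> real"
  assumes "finite A" "A \<noteq> {}" "\<And>x. x \<in> A \<Longrightarrow> a \<le> f x"
  shows "a \<le> (1 / real (card A)) * (\<Sum>x\<in>A. f x)"
  using sum_bounded_below[of A a f] assms by (simp add: field_simps card_gt_0_iff)

lemma mean_le:
  fixes f :: "'a \<Rightarrow> real"
  assumes "finite A" "A \<noteq> {}" "\<And>x. x \<in> A \<Longrightarrow> f x \<le> b"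
  shows "(1 / real (card A)) * (\<Sum>x\<in>A. f x) \<le> b"
  using sum_bounded_above[of A f b] assms by (simp add: field_simps card_gt_0_iff)

lemma AOD_bounds:
  assumes "finite F" "F - {{}} \<noteq> {}"
    and "\<And>A. A \<in> F - {{}} \<Longrightarrow> a \<le> (1 / real (card A)) * (\<Sum>x\<in>A. abundance F x)"
    and "\<And>A. A \<in> F - {{}} \<Longrightarrow> (1 / real (card A)) * (\<Sum>x\<in>A. abundance F x) \<le> b"
  shows "a \<le> AOD F" and "AOD F \<le> b"
  unfolding AOD_def
  by (rule mean_ge mean_le; use assms in simp)+

lemma Union_mem_if_union_closed:
  assumes "union_closed F" "finite S" "S \<noteq> {}" "S \<subseteq> F"
  shows "\<Union>S \<in> F"
  using assms(2-4)
proof (induction S rule: finite_ne_induct)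
  case (insert A S)
  then show ?case using assms(1) unfolding union_closed_def by simp
qed simp

lemma uc_generated_eqI:
  assumes "G \<subseteq> F" "union_closed F"
    and "\<And>A. A \<in> F \<Longrightarrow> \<exists>S. S \<subseteq> G \<and> finite S \<and> S \<noteq> {} \<and> \<Union>S = A"
  shows "uc_generated G = F"
proof
  show "uc_generated G \<subseteq> F"
    unfolding uc_generated_def using assms(1,2) by (intro Inter_lower) simp
  show "F \<subseteq> uc_generated G"
    unfolding uc_generated_def
    using assms(3) by (force intro: Union_mem_if_union_closed)
qed

lemma UN_Int_disjoint_family:
  assumes "disjoint_family_on B I" "\<And>j. j \<in> I \<Longrightarrow> f j \<subseteq> B j" "i \<in> I"
  shows "(\<Union>j\<in>I. f j) \<inter> B i = f i"
proof
  show "f i \<subseteq> (\<Union>j\<in>I. f j) \<inter> B i" using assms(2,3) by blast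
  show "(\<Union>j\<in>I. f j) \<inter> B i \<subseteq> f i"
    using assms unfolding disjoint_family_on_def by fastforce
qed

lemma card_trace_family:
  assumes "finite I" "disjoint_family_on B I" "\<And>i. i \<in> I \<Longrightarrow> C i \<subseteq> Pow (B i)"
  shows "card {A. A \<subseteq> (\<Union>i\<in>I. B i) \<and> (\<forall>i\<in>I. A \<inter> B i \<in> C i)} = (\<Prod>i\<in>I. card (C i))"
proof -
  let ?S = "{A. A \<subseteq> (\<Union>i\<in>I. B i) \<and> (\<forall>i\<in>I. A \<inter> B i \<in> C i)}"
  have "bij_betw (\<lambda>A. restrict (\<lambda>i. A \<inter> B i) I) ?S (PiE I C)"
  proof (rule bij_betw_byWitness[where f' = "\<lambda>f. \<Union>i\<in>I. f i"])
    show "\<forall>A\<in>?S. (\<Union>i\<in>I. restrict (\<lambda>i. A \<inter> B i) I i) = A"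
      by auto
    show "\<forall>f\<in>PiE I C. restrict (\<lambda>i. (\<Union>j\<in>I. f j) \<inter> B i) I = f"
    proof
      fix f assume f: "f \<in> PiE I C"
      then have "\<And>j. j \<in> I \<Longrightarrow> f j \<subseteq> B j" using assms(3) by blast
      then have "restrict (\<lambda>i. (\<Union>j\<in>I. f j) \<inter> B i) I = restrict f I"
        using UN_Int_disjoint_family[OF assms(2)] by (intro restrict_cong) auto
      then show "restrict (\<lambda>i. (\<Union>j\<in>I. f j) \<inter> B i) I = f"
        using f by (simp add: PiE_restrict)
    qed
    show "(\<lambda>A. restrict (\<lambda>i. A \<inter> B i) I) ` ?S \<subseteq> PiE I C"
      by auto
    show "(\<lambda>f. \<Union>i\<in>I. f i) ` PiE I C \<subseteq> ?S"
    proof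
      fix A assume "A \<in> (\<lambda>f. \<Union>i\<in>I. f i) ` PiE I C"
      then obtain f where f: "f \<in> PiE I C" and A: "A = (\<Union>i\<in>I. f i)" by auto
      then have "\<And>j. j \<in> I \<Longrightarrow> f j \<subseteq> B j" using assms(3) by blast
      then show "A \<in> ?S"
        using f UN_Int_disjoint_family[OF assms(2)] unfolding A by auto
    qed
  qed
  then have "card ?S = card (PiE I C)" by (rule bij_betw_same_card)
  also have "\<dots> = (\<Prod>i\<in>I. card (C i))" using assms(1) by (rule card_PiE)
  finally show ?thesis .
qed

locale block_construction =
  fixes k m s n :: nat and B T :: "nat \<Rightarrow> nat set" and TT :: "nat set"
  assumes s_pos: "0 < s" and s_less_k: "s < k"
    and card_B: "\<And>i. i \<in> {1..m} \<Longrightarrow> card (B i) = k"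
    and B_disjoint: "\<And>i j. i \<in> {1..m} \<Longrightarrow> j \<in> {1..m} \<Longrightarrow> i \<noteq> j \<Longrightarrow> B i \<inter> B j = {}"
    and B_cover: "(\<Union>i\<in>{1..m}. B i) = {1..n}"
    and T_subset_B: "\<And>i. i \<in> {1..m} \<Longrightarrow> T i \<subseteq> B i"
    and card_T: "\<And>i. i \<in> {1..m} \<Longrightarrow> card (T i) = s"
    and TT_eq: "TT = (\<Union>i\<in>{1..m}. T i)"
begin

lemma finite_B: "i \<in> {1..m} \<Longrightarrow> finite (B i)"
  using card_B s_less_k card.infinite by fastforce

lemma finite_T: "i \<in> {1..m} \<Longrightarrow> finite (T i)"
  using finite_B T_subset_B finite_subset by blast

lemma T_nonempty: "i \<in> {1..m} \<Longrightarrow> T i \<noteq> {}"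
  using card_T s_pos by force

lemma B_not_subset_T:
  assumes "i \<in> {1..m}" shows "\<not> B i \<subseteq> T i"
proof
  assume "B i \<subseteq> T i"
  then have "card (B i) \<le> card (T i)" using assms finite_T by (intro card_mono)
  then show False using assms card_B card_T s_less_k by simp
qed

lemma disjoint_family_B: "disjoint_family_on B {1..m}"
  using B_disjoint unfolding disjoint_family_on_def by blast

lemma TT_subset: "TT \<subseteq> {1..n}"
  using TT_eq T_subset_B B_cover by blast

lemma card_TT_le: "card TT \<le> m * s"
proof -
  have "card TT \<le> (\<Sum>i\<in>{1..m}. card (T i))" unfolding TT_eq by (rule card_UN_le) simp
  also have "\<dots> = m * s" using card_T by simp
  finally show ?thesis .
qed

definition trace_family :: "(nat \<Rightarrow> nat set set) \<Rightarrow> nat set set" where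
  "trace_family C = {A. A \<subseteq> {1..n} \<and> (\<forall>i\<in>{1..m}. A \<inter> B i \<in> C i)}"

lemma card_trace_family_blocks:
  assumes "\<And>i. i \<in> {1..m} \<Longrightarrow> C i \<subseteq> Pow (B i)"
  shows "card (trace_family C) = (\<Prod>i\<in>{1..m}. card (C i))"
  using card_trace_family[OF _ disjoint_family_B assms] B_cover unfolding trace_family_def by simp

lemma card_insert_B_Pow_T: "i \<in> {1..m} \<Longrightarrow> card (insert (B i) (Pow (T i))) = 2 ^ s + 1"
  using B_not_subset_T finite_T card_T by (simp add: card_Pow)

definition block_generators :: "nat set set" where
  "block_generators = {B i \<union> {t} | i t. i \<in> {1..m} \<and> t \<in> TT}"

definition block_family :: "nat set set" where
  "block_family = {A. A \<subseteq> {1..n} \<and> (\<forall>i\<in>{1..m}. A \<inter> B i \<in> insert (B i) (Pow (T i)))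
                     \<and> (\<exists>i\<in>{1..m}. B i \<subseteq> A)}"

lemma block_generators_subset_block_family: "block_generators \<subseteq> block_family"
proof
  fix A assume "A \<in> block_generators"
  then obtain i t l where i: "i \<in> {1..m}" and l: "l \<in> {1..m}" "t \<in> T l" and A: "A = B i \<union> {t}"
    unfolding block_generators_def using TT_eq by blast
  have "A \<inter> B p \<in> insert (B p) (Pow (T p))" if p: "p \<in> {1..m}" for p
  proof (cases "p = i")
    case False
    then have "A \<inter> B p \<subseteq> {t} \<inter> B p" using A B_disjoint[OF i p] by blast
    also have "\<dots> \<subseteq> T p" using B_disjoint[OF l(1) p] l T_subset_B by blast
    finally show ?thesis by blast
  qed (use A in blast)
  moreover have "A \<subseteq> {1..n}" using A i l B_cover TT_subset TT_eq by blast
  ultimately show "A \<in> block_family"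
    unfolding block_family_def using A i by blast
qed

lemma union_closed_block_family: "union_closed block_family"
  unfolding union_closed_def block_family_def by (auto simp: Int_Un_distrib2)

lemma block_generatorsI: "i \<in> {1..m} \<Longrightarrow> t \<in> TT \<Longrightarrow> B i \<union> {t} \<in> block_generators"
  unfolding block_generators_def by blast

lemma block_family_Union_generators:
  assumes A: "A \<in> block_family"
  shows "\<exists>S \<subseteq> block_generators. finite S \<and> S \<noteq> {} \<and> \<Union>S = A"
proof -
  let ?S = "{g \<in> block_generators. g \<subseteq> A}"
  have A_sub: "A \<subseteq> {1..n}" and A_traces: "\<forall>i\<in>{1..m}. A \<inter> B i \<in> insert (B i) (Pow (T i))"
    using A unfolding block_family_def by auto
  obtain i0 where i0: "i0 \<in> {1..m}" "B i0 \<subseteq> A"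
    using A unfolding block_family_def by auto
  have full_block: "B p \<subseteq> \<Union>?S" if p: "p \<in> {1..m}" "B p \<subseteq> A" for p
  proof -
    obtain t where "t \<in> T p" using T_nonempty[OF p(1)] by blast
    then have "t \<in> TT" "t \<in> B p" using p(1) T_subset_B TT_eq by auto
    then have "B p \<union> {t} \<in> ?S" using block_generatorsI[OF p(1)] p(2) by auto
    then show ?thesis by blast
  qed
  have "?S \<subseteq> Pow {1..n}" using A_sub by blast
  then have "finite ?S" by (rule finite_subset) simp
  moreover have "?S \<noteq> {}"
    using full_block[OF i0] B_not_subset_T[OF i0(1)] by blast
  moreover have "\<Union>?S = A"
  proof (rule equalityI[OF _ subsetI])
    fix y assume y: "y \<in> A"
    then have "y \<in> (\<Union>i\<in>{1..m}. B i)" unfolding B_cover using A_sub by blast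
    then obtain p where p: "p \<in> {1..m}" "y \<in> B p" by blast
    show "y \<in> \<Union>?S"
    proof (cases "B p \<subseteq> A")
      case False
      then have "A \<inter> B p \<subseteq> T p" using A_traces p(1) by auto
      then have "y \<in> TT" unfolding TT_eq using p y by blast
      then have "B i0 \<union> {y} \<in> ?S" using block_generatorsI[OF i0(1)] i0(2) y by blast
      then show ?thesis by blast
    qed (use full_block p in blast)
  qed blast
  ultimately show ?thesis by (intro exI[of _ ?S]) blast
qed

lemma uc_generated_block_generators: "uc_generated block_generators = block_family"
  by (rule uc_generated_eqI[OF block_generators_subset_block_family union_closed_block_family
        block_family_Union_generators])

lemma block_family_subset: "A \<in> block_family \<Longrightarrow> A \<subseteq> {1..n}"
  unfolding block_family_def by blast

lemma finite_block_family: "finite block_family"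
  by (rule finite_subset[of _ "Pow {1..n}"]) (use block_family_subset in auto)

lemma block_family_eq_Diff:
  "block_family = trace_family (\<lambda>i. insert (B i) (Pow (T i))) - trace_family (\<lambda>i. Pow (T i))"
proof (intro equalityI subsetI)
  fix A assume A: "A \<in> block_family"
  then obtain i where i: "i \<in> {1..m}" "A \<inter> B i = B i"
    unfolding block_family_def by blast
  then have "\<not> A \<inter> B i \<subseteq> T i" using B_not_subset_T[OF i(1)] by simp
  then have "A \<notin> trace_family (\<lambda>i. Pow (T i))"
    using i(1) unfolding trace_family_def by blast
  with A show "A \<in> trace_family (\<lambda>i. insert (B i) (Pow (T i))) - trace_family (\<lambda>i. Pow (T i))"
    unfolding block_family_def trace_family_def by blast
next
  fix A assume A: "A \<in> trace_family (\<lambda>i. insert (B i) (Pow (T i))) - trace_family (\<lambda>i. Pow (T i))"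
  then obtain i where i: "i \<in> {1..m}" "A \<inter> B i \<notin> Pow (T i)"
    unfolding trace_family_def by blast
  with A have "B i \<subseteq> A" unfolding trace_family_def by auto
  with A i(1) show "A \<in> block_family" unfolding block_family_def trace_family_def by blast
qed

lemma card_block_family: "card block_family + (2 ^ s) ^ m = (2 ^ s + 1) ^ m"
proof -
  have card_G: "card (trace_family (\<lambda>i. insert (B i) (Pow (T i)))) = (2 ^ s + 1) ^ m"
    using T_subset_B by (subst card_trace_family_blocks) (auto simp: card_insert_B_Pow_T)
  have card_H: "card (trace_family (\<lambda>i. Pow (T i))) = (2 ^ s) ^ m"
    using T_subset_B by (subst card_trace_family_blocks) (auto simp: card_Pow finite_T card_T)
  have H_G: "trace_family (\<lambda>i. Pow (T i)) \<subseteq> trace_family (\<lambda>i. insert (B i) (Pow (T i)))"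
    unfolding trace_family_def by blast
  have "finite (trace_family (\<lambda>i. insert (B i) (Pow (T i))))"
    by (rule finite_subset[of _ "Pow {1..n}"]) (auto simp: trace_family_def)
  then show ?thesis
    using card_Diff_subset[OF finite_subset[OF H_G] H_G] card_mono[OF _ H_G] card_G card_H
    unfolding block_family_eq_Diff by simp
qed

lemma card_block_family_containing:
  assumes x: "x \<in> {1..n} - TT"
  shows "card {A \<in> block_family. x \<in> A} = (2 ^ s + 1) ^ (m - 1)"
proof -
  have "x \<in> (\<Union>i\<in>{1..m}. B i)" unfolding B_cover using x by blast
  then obtain j where j: "j \<in> {1..m}" "x \<in> B j" by blast
  have x_T: "x \<notin> T j" using x j(1) TT_eq by blast
  let ?C = "\<lambda>i. if i = j then {B j} else insert (B i) (Pow (T i))"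
  have "{A \<in> block_family. x \<in> A} = trace_family ?C"
  proof (intro equalityI subsetI)
    fix A assume A: "A \<in> {A \<in> block_family. x \<in> A}"
    then have "A \<inter> B j = B j" using x_T j unfolding block_family_def by blast
    with A show "A \<in> trace_family ?C" unfolding block_family_def trace_family_def by auto
  next
    fix A assume A: "A \<in> trace_family ?C"
    then have "A \<inter> B j \<in> {B j}" using j(1) unfolding trace_family_def by fastforce
    with A j show "A \<in> {A \<in> block_family. x \<in> A}"
      unfolding block_family_def trace_family_def by (auto split: if_splits)
  qed
  also have "card (trace_family ?C) = (\<Prod>i\<in>{1..m}. if i = j then 1 else 2 ^ s + 1)"
    using T_subset_B
    by (subst card_trace_family_blocks) (auto simp: card_insert_B_Pow_T intro!: prod.cong)
  also have "\<dots> = (2 ^ s + 1) ^ (m - 1)"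
    using j(1) by (simp add: prod.If_cases Int_absorb1 Diff_eq[symmetric])
  finally show ?thesis .
qed

lemma insert_mem_block_family:
  assumes x: "x \<in> TT" and A: "A \<in> block_family"
  shows "insert x A \<in> block_family"
proof -
  obtain j where j: "j \<in> {1..m}" "x \<in> T j" using x TT_eq by blast
  have "insert x A \<inter> B i \<in> insert (B i) (Pow (T i))" if i: "i \<in> {1..m}" for i
  proof (cases "i = j")
    case True
    then show ?thesis using A i j T_subset_B unfolding block_family_def by auto
  next
    case False
    then have "x \<notin> B i" using B_disjoint[OF i j(1)] j T_subset_B by blast
    then show ?thesis using A i unfolding block_family_def by auto
  qed
  then show ?thesis using A x TT_subset unfolding block_family_def by blast
qed

lemma interval_mem_block_family:
  assumes "1 \<le> m" shows "{1..n} \<in> block_family"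
proof -
  have "\<forall>i\<in>{1..m}. B i \<subseteq> {1..n}" using B_cover by blast
  then show ?thesis using assms unfolding block_family_def by force
qed

lemma card_mem_block_family_ge:
  assumes "A \<in> block_family"
  shows "k \<le> card A"
proof -
  obtain i where i: "i \<in> {1..m}" "B i \<subseteq> A" using assms unfolding block_family_def by blast
  have "finite A" using assms block_family_subset finite_subset by blast
  then show ?thesis using card_mono[OF _ i(2)] card_B[OF i(1)] by simp
qed

lemma abundance_block_family_outside:
  assumes "x \<in> {1..n} - TT"
  shows "abundance block_family x = (2 ^ s + 1) ^ (m - 1) / ((2 ^ s + 1) ^ m - (2 ^ s) ^ m)"
proof -
  have "real (card block_family) = (2 ^ s + 1) ^ m - (2 ^ s) ^ m"
    using arg_cong[OF card_block_family, of real] by (simp add: add.commute eq_diff_eq)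
  then show ?thesis
    using card_block_family_containing[OF assms] unfolding abundance_def by (simp add: add.commute)
qed

lemma mean_le_block_family:
  fixes f :: "nat \<Rightarrow> real"
  assumes A: "A \<in> block_family"
    and on_TT: "\<And>x. x \<in> TT \<Longrightarrow> f x \<le> 1"
    and off_TT: "\<And>x. x \<in> {1..n} - TT \<Longrightarrow> f x \<le> b" and "0 \<le> b"
  shows "(1 / real (card A)) * (\<Sum>x\<in>A. f x) \<le> b + real m * real s / real k"
proof -
  have fin: "finite A" using A block_family_subset finite_subset by blast
  have k_A: "real k \<le> real (card A)" and k_pos: "0 < real k"
    using card_mem_block_family_ge[OF A] s_less_k by auto
  have "(\<Sum>x\<in>A. f x) = (\<Sum>x\<in>A \<inter> TT. f x) + (\<Sum>x\<in>A - TT. f x)"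
    using fin by (rule sum.Int_Diff)
  also have "\<dots> \<le> real (card (A \<inter> TT)) + real (card (A - TT)) * b"
    using on_TT off_TT block_family_subset[OF A]
    by (intro add_mono sum_bounded_above[where K = 1, simplified] sum_bounded_above) auto
  also have "\<dots> \<le> real m * real s + real (card A) * b"
  proof (intro add_mono mult_right_mono)
    have "card (A \<inter> TT) \<le> card TT"
      using TT_subset by (intro card_mono) (auto intro: finite_subset)
    then show "real (card (A \<inter> TT)) \<le> real m * real s"
      using card_TT_le by (metis of_nat_le_iff of_nat_mult order_trans)
  qed (use fin \<open>0 \<le> b\<close> in \<open>auto intro: card_mono\<close>)
  finally have "(1 / real (card A)) * (\<Sum>x\<in>A. f x) \<le> real m * real s / real (card A) + b"
    using k_A k_pos by (simp add: field_simps)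
  also have "real m * real s / real (card A) \<le> real m * real s / real k"
    using k_A k_pos by (intro divide_left_mono) auto
  finally show ?thesis by simp
qed

context
  assumes m_pos: "1 \<le> m" and m_le: "real m \<le> 2 ^ s + 2"
begin

lemma abundance_block_family_outside_bounds:
  assumes "x \<in> {1..n} - TT"
  shows "1 / real m \<le> abundance block_family x \<and> abundance block_family x \<le> 2 / real m"
  unfolding abundance_block_family_outside[OF assms]
  using succ_power_ratio_bounds[OF _ m_pos m_le] by simp

lemma abundance_block_family_TT_bounds:
  assumes "x \<in> TT"
  shows "1 / 2 \<le> abundance block_family x \<and> abundance block_family x \<le> 1"
proof -
  have "1 / 2 \<le> abundance block_family x"
    by (rule abundance_ge_half[OF finite_block_family])
      (use interval_mem_block_family[OF m_pos] insert_mem_block_family[OF assms] in auto)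
  then show ?thesis using abundance_le_1 by simp
qed

lemma AOD_block_family_bounds:
  assumes "2 \<le> m"
  shows "1 / real m \<le> AOD block_family \<and> AOD block_family \<le> 2 / real m + real m * real s / real k"
proof -
  have abundance_ge: "1 / real m \<le> abundance block_family x" if "x \<in> {1..n}" for x
  proof (cases "x \<in> TT")
    case True
    have "1 / real m \<le> 1 / 2" using assms by simp
    then show ?thesis using abundance_block_family_TT_bounds[OF True] by linarith
  qed (use that abundance_block_family_outside_bounds in blast)
  have "{} \<notin> block_family" using card_mem_block_family_ge[of "{}"] s_less_k by auto
  then have "block_family - {{}} = block_family" by simp
  moreover have "block_family \<noteq> {}" using interval_mem_block_family[OF m_pos] by auto
  moreover have "1 / real m \<le> (1 / real (card A)) * (\<Sum>x\<in>A. abundance block_family x)"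
    if A: "A \<in> block_family" for A
    using block_family_subset[OF A] \<open>{} \<notin> block_family\<close> A abundance_ge
    by (intro mean_ge) (auto intro: finite_subset)
  moreover have "(1 / real (card A)) * (\<Sum>x\<in>A. abundance block_family x)
      \<le> 2 / real m + real m * real s / real k" if A: "A \<in> block_family" for A
    by (rule mean_le_block_family)
      (use A abundance_block_family_outside_bounds abundance_le_1 in auto)
  ultimately show ?thesis
    using AOD_bounds[OF finite_block_family, of "1 / real m" "2 / real m + real m * real s / real k"]
    by simp
qed

end

end

theorem mainTheorem3:
  fixes k m s n :: nat
    and B T :: "nat \<Rightarrow> nat set"
    and TT :: "nat set"
    and F :: "nat set set"
  assumes "k > 0" and "m \<ge> 2" and "s > 0" and "s + 2 \<le> k"
    and "real m / 2 ^ s \<le> 1 / 4"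
    and "n = k * m"
    and "\<And>i. i \<in> {1..m} \<Longrightarrow> card (B i) = k"
    and "\<And>i j. i \<in> {1..m} \<Longrightarrow> j \<in> {1..m} \<Longrightarrow> i \<noteq> j \<Longrightarrow> B i \<inter> B j = {}"
    and "(\<Union>i\<in>{1..m}. B i) = {1..n}"
    and "\<And>i. i \<in> {1..m} \<Longrightarrow> T i \<subseteq> B i"
    and "\<And>i. i \<in> {1..m} \<Longrightarrow> card (T i) = s"
    and "TT = (\<Union>i\<in>{1..m}. T i)"
    and "F = uc_generated {B i \<union> {t} | i t. i \<in> {1..m} \<and> t \<in> TT}"
  shows "(\<forall>x\<in>{1..n} - TT. 1 / real m \<le> abundance F x \<and> abundance F x \<le> 2 / real m)
       \<and> (\<forall>x\<in>TT. 1 / 2 \<le> abundance F x \<and> abundance F x \<le> 1)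
       \<and> (1 / real m \<le> AOD F \<and>
          AOD F \<le> 2 / real m + real m ^ 2 * real s / real n)"
proof -
  interpret block_construction k m s n B T TT
    using assms by unfold_locales auto
  have F: "F = block_family"
    using assms(13) uc_generated_block_generators unfolding block_generators_def by simp
  have m: "1 \<le> m" "real m \<le> 2 ^ s + 2" using assms(2,5) by (auto simp: field_simps)
  have "real m * real s / real k = real m ^ 2 * real s / real n"
    using assms(2,6) by (simp add: field_simps power2_eq_square)
  then show ?thesis
    unfolding F using abundance_block_family_outside_bounds[OF m]
      abundance_block_family_TT_bounds[OF m] AOD_block_family_bounds[OF m assms(2)] by simp
qed

end
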